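(* For $\alpha>0$ and $x>0$, $$G\Bigl(x;\frac1\alpha\Bigr)=\frac{G(\alpha x;\alpha)}{G(\alpha;\alpha)^x}\,\alpha^{\frac{(x-1)(\alpha x-2)}{2}} .$$
   Context: For $\alpha>0$, $\operatorname{Re}x>0$, $G(x;\alpha)$ is defined by $\ln G(x;\alpha)=\int_0^\infty\frac{e^{-\alpha u}}{u}\bigl\{\frac{(x-1)(x-2\alpha)}{2\alpha}-\frac{x-1}{1-e^{-\alpha u}}+\frac{e^{-(1-\alpha)u}-e^{-(x-\alpha)u}}{(1-e^{-u})(1-e^{-\alpha u})}\bigr\}du$; it satisfies $G(1;\alpha)=1$, $G(x+1;\alpha)=\Gamma(x/\alpha)G(x;\alpha)$, and $G(\alpha;\alpha)=\alpha^{-1/2}(2\pi)^{(\alpha-1)/2}$. *)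

theory Defs
  imports "HOL-Analysis.Analysis"
begin

definition lnG :: "real \<Rightarrow> real \<Rightarrow> real" where
  "lnG x \<alpha> = integral {0<..} (\<lambda>u. exp (-\<alpha>*u) / u *
      ((x - 1) * (x - 2*\<alpha>) / (2*\<alpha>) - (x - 1) / (1 - exp (-\<alpha>*u))
       + (exp (-(1-\<alpha>)*u) - exp (-(x-\<alpha>)*u)) / ((1 - exp (-u)) * (1 - exp (-\<alpha>*u)))))"

definition G :: "real \<Rightarrow> real \<Rightarrow> real" where
  "G x \<alpha> = exp (lnG x \<alpha>)"

end

theory Submission
  imports Defs
begin

text \<open>
  Substituting \<open>u = \<alpha> t\<close> in the integral for \<open>ln G(x; 1/\<alpha>)\<close> turns its integrand, exactly and
  pointwise, into the integrand of \<open>ln G(\<alpha> x; \<alpha>)\<close>, minus \<open>x\<close> times that of \<open>ln G(\<alpha>; \<alpha>)\<close>, plus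
  \<open>(x - 1)(\<alpha> x - 2)/2\<close> times the Frullani kernel \<open>(exp(-t) - exp(-\<alpha> t))/t\<close>, whose integral is
  \<open>ln \<alpha>\<close>; exponentiating gives the formula. All integrals converge absolutely: the denominator
  \<open>u (1 - exp(-\<alpha> u)) (1 - exp(-u))\<close> is of order \<open>u^3\<close> at \<open>0\<close>, and so is the numerator, an
  exponential sum \<open>\<Sum> c exp(-l u)\<close> whose moments \<open>\<Sum> c l^k\<close> vanish for \<open>k \<le> 2\<close>.
\<close>

lemma absolutely_integrable_on_exp_decay:
  fixes f :: "real \<Rightarrow> real"
  assumes "continuous_on S f" "S \<in> sets lebesgue" "S \<subseteq> {c..}" "m > 0"
    and bound: "\<And>t. t \<in> S \<Longrightarrow> \<bar>f t\<bar> \<le> K * exp (-m*t)"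
  shows "f absolutely_integrable_on S"
proof (rule measurable_bounded_by_integrable_imp_absolutely_integrable)
  show "f \<in> borel_measurable (lebesgue_on S)"
    using assms(1,2) by (rule continuous_imp_measurable_on_sets_lebesgue)
  show "(\<lambda>t. \<bar>K\<bar> * exp (-m*t)) integrable_on S"
  proof -
    have "(\<lambda>t. \<bar>K\<bar> * exp (-m*t)) absolutely_integrable_on {c..}"
      using integrable_on_exp_minus_to_infinity[OF \<open>m > 0\<close>, of c]
      by (intro nonnegative_absolutely_integrable_1 integrable_on_mult_right) auto
    then have "(\<lambda>t. \<bar>K\<bar> * exp (-m*t)) absolutely_integrable_on S"
      by (rule set_integrable_subset) (use assms(2,3) in auto)
    then show ?thesis
      using set_lebesgue_integral_eq_integral(1) by blast
  qed
  show "norm (f t) \<le> \<bar>K\<bar> * exp (-m*t)" if "t \<in> S" for t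
    using bound[OF that] by (simp add: order_trans[OF _ mult_right_mono])
qed (use assms in auto)

lemma absolutely_integrable_on_bounded_exp_decay:
  fixes f :: "real \<Rightarrow> real"
  assumes "continuous_on {0<..} f" "m > 0"
    and near_zero: "\<And>t. 0 < t \<Longrightarrow> t \<le> 1 \<Longrightarrow> \<bar>f t\<bar> \<le> B"
    and decay: "\<And>t. 1 \<le> t \<Longrightarrow> \<bar>f t\<bar> \<le> K * exp (-m*t)"
  shows "f absolutely_integrable_on {0<..}"
proof (rule absolutely_integrable_on_exp_decay[where c=0 and K="\<bar>B\<bar> * exp m + \<bar>K\<bar>"])
  fix t :: real
  assume "t \<in> {0<..}"
  have split: "(\<bar>B\<bar> * exp m + \<bar>K\<bar>) * exp (-m*t) = \<bar>B\<bar> * exp m * exp (-m*t) + \<bar>K\<bar> * exp (-m*t)"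
    by (simp add: algebra_simps)
  have "0 \<le> \<bar>B\<bar> * exp m * exp (-m*t)" "0 \<le> \<bar>K\<bar> * exp (-m*t)"
    by simp_all
  moreover have "\<bar>f t\<bar> \<le> \<bar>B\<bar> * exp m * exp (-m*t)" if "t \<le> 1"
  proof -
    have "1 \<le> exp m * exp (-m*t)"
      using that \<open>m > 0\<close> by (simp add: mult_exp_exp)
    then have "\<bar>B\<bar> \<le> \<bar>B\<bar> * exp m * exp (-m*t)"
      by (simp add: mult.assoc mult_le_cancel_left1)
    then show ?thesis
      using near_zero[of t] that \<open>t \<in> {0<..}\<close> by simp
  qed
  moreover have "\<bar>f t\<bar> \<le> \<bar>K\<bar> * exp (-m*t)" if "\<not> t \<le> 1"
    using decay[of t] that by (simp add: order_trans[OF _ mult_right_mono])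
  ultimately show "\<bar>f t\<bar> \<le> (\<bar>B\<bar> * exp m + \<bar>K\<bar>) * exp (-m*t)"
    unfolding split by (cases "t \<le> 1") linarith+
qed (use assms in auto)

lemma mem_image_mult_iff: "x \<in> (*) a ` S \<longleftrightarrow> x / a \<in> S" if "a \<noteq> 0" for a x :: real
  using that by (auto intro: image_eqI[of _ _ "x / a"])

lemma image_mult_greaterThan: "(*) a ` {c<..} = {a*c<..}" if "a > 0" for a c :: real
  using that by (intro set_eqI) (simp add: mem_image_mult_iff pos_less_divide_eq mult.commute[of a c])

lemma image_mult_atLeast: "(*) a ` {c..} = {a*c..}" if "a > 0" for a c :: real
  using that by (intro set_eqI) (simp add: mem_image_mult_iff pos_le_divide_eq mult.commute[of a c])

lemma absolutely_integrable_scaled: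
  fixes f :: "real \<Rightarrow> real"
  assumes "a > 0" "S \<in> sets lebesgue" "f absolutely_integrable_on ((*) a ` S)"
  shows "(\<lambda>t. a * f (a*t)) absolutely_integrable_on S"
    and "integral S (\<lambda>t. a * f (a*t)) = integral ((*) a ` S) f"
  using has_absolute_integral_change_of_variables_1'[of S "(*) a" "\<lambda>_. a" f "integral ((*) a ` S) f"] assms
  by (auto intro!: derivative_eq_intros simp: inj_on_def)

lemma exp_minus_taylor_remainder:
  fixes s :: real
  assumes "0 \<le> s"
  shows "\<bar>exp (-s) - (1 - s + s^2/2)\<bar> \<le> exp s * s^3 / 6"
proof -
  obtain t where "\<bar>t\<bar> \<le> \<bar>-s\<bar>"
    and taylor: "exp (-s) = (\<Sum>m<3. (-s) ^ m / fact m) + exp t / fact 3 * (-s) ^ 3"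
    using Maclaurin_exp_le[of "-s" 3] by blast
  then have "exp t \<le> exp s" using assms by simp
  moreover have "(\<Sum>m<3. (-s) ^ m / fact m) = 1 - s + s^2/2"
    by (simp add: eval_nat_numeral fact_numeral)
  ultimately show ?thesis
    using taylor assms by (simp add: fact_numeral power_minus_odd abs_mult divide_right_mono mult_right_mono)
qed

lemma exp_minus_ge_linear: "s * exp (-s) \<le> 1 - exp (-s)" if "s \<ge> 0" for s :: real
proof -
  have "exp (-s) * (1 + s) \<le> exp (-s) * exp s"
    by (intro mult_left_mono) auto
  then show ?thesis by (simp add: exp_minus field_simps)
qed

lemma exp_minus_diff_abs_le:
  fixes s t :: real
  assumes "0 \<le> s" "0 \<le> t"
  shows "\<bar>exp (-s) - exp (-t)\<bar> \<le> \<bar>s - t\<bar>"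
proof -
  have *: "exp (-s) - exp (-t) \<le> t - s" if "0 \<le> s" "s \<le> t" for s t :: real
  proof -
    have "exp (-s) - exp (-t) = exp (-s) * (1 - exp (-(t - s)))"
      by (simp add: algebra_simps flip: exp_add)
    also have "\<dots> \<le> 1 * (t - s)"
    proof (rule mult_mono)
      show "1 - exp (-(t - s)) \<le> t - s"
        using exp_ge_add_one_self[of "-(t - s)"] by linarith
    qed (use that in auto)
    finally show ?thesis by simp
  qed
  show ?thesis
    using *[of s t] *[of t s] assms by (cases "s \<le> t") auto
qed

section \<open>Exponential sums with vanishing moments\<close>

definition exp_sum :: "(real \<times> real) list \<Rightarrow> real \<Rightarrow> real" where
  "exp_sum cls u = (\<Sum>(c, l)\<leftarrow>cls. c * exp (- l * u))"

lemma continuous_on_exp_sum: "continuous_on S (exp_sum cls)"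
  unfolding exp_sum_def by (induction cls) (auto intro!: continuous_intros)

lemma exp_sum_bound_near_zero:
  assumes exponents: "\<forall>(c, l) \<in> set cls. 0 \<le> l"
    and moments: "(\<Sum>(c, l)\<leftarrow>cls. c) = 0" "(\<Sum>(c, l)\<leftarrow>cls. c * l) = 0"
      "(\<Sum>(c, l)\<leftarrow>cls. c * l^2) = 0"
    and u: "0 \<le> u" "u \<le> 1"
  shows "\<bar>exp_sum cls u\<bar> \<le> (\<Sum>(c, l)\<leftarrow>cls. \<bar>c\<bar> * l^3 * exp l) / 6 * u^3"
proof -
  define r where "r l = exp (- l * u) - (1 - l*u + (l*u)^2/2)" for l
  have "exp_sum cls u = (\<Sum>(c, l)\<leftarrow>cls. c * r l) + (\<Sum>(c, l)\<leftarrow>cls. c)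
      - u * (\<Sum>(c, l)\<leftarrow>cls. c * l) + u^2/2 * (\<Sum>(c, l)\<leftarrow>cls. c * l^2)"
    unfolding exp_sum_def r_def by (induction cls) (auto simp: algebra_simps power2_eq_square)
  also have "\<dots> = (\<Sum>(c, l)\<leftarrow>cls. c * r l)"
    using moments by simp
  finally have "\<bar>exp_sum cls u\<bar> \<le> (\<Sum>(c, l)\<leftarrow>cls. \<bar>c * r l\<bar>)"
    using sum_list_abs[of "map (\<lambda>(c, l). c * r l) cls"] by (simp add: case_prod_unfold o_def)
  also have "\<dots> \<le> (\<Sum>(c, l)\<leftarrow>cls. \<bar>c\<bar> * l^3 * exp l / 6 * u^3)"
  proof (rule sum_list_mono, clarify)
    fix c l assume "(c, l) \<in> set cls"
    with exponents have l: "0 \<le> l" by auto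
    have "exp (l*u) \<le> exp l"
      using l u by (simp add: mult_left_le)
    then have "\<bar>r l\<bar> \<le> exp l * (l*u)^3 / 6"
      using exp_minus_taylor_remainder[of "l*u"] l u unfolding r_def
      by (simp add: order_trans divide_right_mono mult_right_mono)
    then show "\<bar>c * r l\<bar> \<le> \<bar>c\<bar> * l^3 * exp l / 6 * u^3"
      by (simp add: abs_mult mult_left_mono power_mult_distrib mult_ac)
  qed
  also have "\<dots> = (\<Sum>(c, l)\<leftarrow>cls. \<bar>c\<bar> * l^3 * exp l) / 6 * u^3"
    by (induction cls) (auto simp: algebra_simps)
  finally show ?thesis .
qed

lemma exp_sum_bound_decay:
  assumes "\<forall>(c, l) \<in> set cls. m \<le> l" "0 \<le> u"
  shows "\<bar>exp_sum cls u\<bar> \<le> (\<Sum>(c, l)\<leftarrow>cls. \<bar>c\<bar>) * exp (-m*u)"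
proof -
  have "\<bar>exp_sum cls u\<bar> \<le> (\<Sum>(c, l)\<leftarrow>cls. \<bar>c * exp (- l * u)\<bar>)"
    unfolding exp_sum_def
    using sum_list_abs[of "map (\<lambda>(c, l). c * exp (- l * u)) cls"] by (simp add: case_prod_unfold o_def)
  also have "\<dots> \<le> (\<Sum>(c, l)\<leftarrow>cls. \<bar>c\<bar> * exp (-m*u))"
    using assms by (intro sum_list_mono) (auto simp: abs_mult mult_left_mono mult_right_mono)
  also have "\<dots> = (\<Sum>(c, l)\<leftarrow>cls. \<bar>c\<bar>) * exp (-m*u)"
    by (induction cls) (auto simp: algebra_simps)
  finally show ?thesis .
qed

lemma exp_denominator_lower_near_zero:
  fixes a u :: real
  assumes "a > 0" "0 < u" "u \<le> 1"
  shows "a * exp (-(a+1)) * u^3 \<le> u * (1 - exp (-a*u)) * (1 - exp (-u))"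
proof -
  have "a*u * exp (-a) \<le> a*u * exp (-(a*u))"
    using assms by (intro mult_left_mono) (auto simp: mult_left_le)
  also have "\<dots> \<le> 1 - exp (-a*u)"
    using exp_minus_ge_linear[of "a*u"] assms by simp
  finally have a: "a*u * exp (-a) \<le> 1 - exp (-a*u)" .
  have "u * exp (-1) \<le> u * exp (-u)"
    using assms by (intro mult_left_mono) auto
  also have "\<dots> \<le> 1 - exp (-u)"
    using exp_minus_ge_linear[of u] assms by simp
  finally have b: "u * exp (-1) \<le> 1 - exp (-u)" .
  have "a * exp (-(a+1)) * u^3 = u * (a*u * exp (-a)) * (u * exp (-1))"
    by (simp add: power3_eq_cube mult_exp_exp algebra_simps)
  also have "\<dots> \<le> u * (1 - exp (-a*u)) * (1 - exp (-u))"
    using a b assms by (intro mult_mono) auto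
  finally show ?thesis .
qed

lemma exp_denominator_lower_far:
  fixes a u :: real
  assumes "a > 0" "1 \<le> u"
  shows "(1 - exp (-a)) * (1 - exp (-1)) \<le> u * (1 - exp (-a*u)) * (1 - exp (-u))"
proof -
  have "(1 - exp (-a)) * (1 - exp (-1)) \<le> (1 - exp (-a*u)) * (1 - exp (-u))"
    using assms by (intro mult_mono) auto
  also have "\<dots> \<le> u * ((1 - exp (-a*u)) * (1 - exp (-u)))"
    using assms mult_right_mono[of 1 u "(1 - exp (-a*u)) * (1 - exp (-u))"] by simp
  finally show ?thesis by (simp add: mult.assoc)
qed

lemma exp_sum_quotient_absolutely_integrable:
  fixes a m :: real
  assumes "a > 0" "m > 0" and exponents: "\<forall>(c, l) \<in> set cls. m \<le> l"
    and moments: "(\<Sum>(c, l)\<leftarrow>cls. c) = 0" "(\<Sum>(c, l)\<leftarrow>cls. c * l) = 0"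
      "(\<Sum>(c, l)\<leftarrow>cls. c * l^2) = 0"
  shows "(\<lambda>u. exp_sum cls u / (u * (1 - exp (-a*u)) * (1 - exp (-u)))) absolutely_integrable_on {0<..}"
proof -
  define D where "D u = u * (1 - exp (-a*u)) * (1 - exp (-u))" for u
  define C where "C = (\<Sum>(c, l)\<leftarrow>cls. \<bar>c\<bar> * l^3 * exp l) / 6"
  define d where "d = (1 - exp (-a)) * (1 - exp (-1::real))"
  have D_pos: "D u > 0" if "u > 0" for u
    using that assms unfolding D_def by (intro mult_pos_pos) auto
  have "d > 0"
    using assms unfolding d_def by (intro mult_pos_pos) auto
  have nonneg: "\<forall>(c, l) \<in> set cls. 0 \<le> l"
    using exponents \<open>m > 0\<close> by fastforce
  then have "C \<ge> 0"
    unfolding C_def by (fastforce intro!: sum_list_nonneg)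
  have "(\<lambda>u. exp_sum cls u / D u) absolutely_integrable_on {0<..}"
  proof (rule absolutely_integrable_on_bounded_exp_decay[OF _ \<open>m > 0\<close>])
    have "continuous_on {0<..} D"
      unfolding D_def by (intro continuous_intros)
    then show "continuous_on {0<..} (\<lambda>u. exp_sum cls u / D u)"
      using D_pos by (intro continuous_on_divide continuous_on_exp_sum)
        (auto simp: dual_order.strict_implies_not_eq)
    fix u :: real
    assume u: "0 < u" "u \<le> 1"
    have "\<bar>exp_sum cls u\<bar> \<le> C * u^3"
      unfolding C_def using nonneg moments u by (intro exp_sum_bound_near_zero) auto
    also have "\<dots> = C / (a * exp (-(a+1))) * (a * exp (-(a+1)) * u^3)"
      using assms by simp
    also have "\<dots> \<le> C / (a * exp (-(a+1))) * D u"
      using exp_denominator_lower_near_zero[OF assms(1) u] \<open>C \<ge> 0\<close> assms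
      unfolding D_def by (intro mult_left_mono) auto
    finally show "\<bar>exp_sum cls u / D u\<bar> \<le> C / (a * exp (-(a+1)))"
      using D_pos[OF u(1)] by (simp add: pos_divide_le_eq)
  next
    fix u :: real
    assume "1 \<le> u"
    then have "d \<le> D u"
      using exp_denominator_lower_far[OF assms(1)] unfolding D_def d_def by blast
    then have "\<bar>exp_sum cls u / D u\<bar> \<le> \<bar>exp_sum cls u\<bar> / d"
      using \<open>d > 0\<close> abs_of_pos[OF D_pos[of u]] \<open>1 \<le> u\<close>
      by (simp add: abs_divide divide_left_mono)
    also have "\<dots> \<le> (\<Sum>(c, l)\<leftarrow>cls. \<bar>c\<bar>) * exp (-m*u) / d"
      using exp_sum_bound_decay[OF exponents] \<open>1 \<le> u\<close> \<open>d > 0\<close> by (simp add: divide_right_mono)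
    finally show "\<bar>exp_sum cls u / D u\<bar> \<le> (\<Sum>(c, l)\<leftarrow>cls. \<bar>c\<bar>) / d * exp (-m*u)"
      by simp
  qed
  then show ?thesis
    unfolding D_def .
qed

section \<open>Frullani's integral\<close>

lemma frullani_kernel_bound:
  fixes \<alpha> t :: real
  assumes "\<alpha> > 0" "t > 0"
  shows "\<bar>(exp (-t) - exp (-\<alpha>*t)) / t\<bar> \<le> \<bar>\<alpha> - 1\<bar>"
proof -
  have "\<bar>exp (-t) - exp (-\<alpha>*t)\<bar> \<le> \<bar>t - \<alpha>*t\<bar>"
    using exp_minus_diff_abs_le[of t "\<alpha>*t"] assms by simp
  also have "t - \<alpha>*t = - ((\<alpha> - 1) * t)"
    by (simp add: algebra_simps)
  also have "\<bar>- ((\<alpha> - 1) * t)\<bar> = \<bar>\<alpha> - 1\<bar> * t"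
    using assms by (simp add: abs_mult)
  finally show ?thesis
    using assms by (simp add: pos_divide_le_eq)
qed

lemma frullani_kernel_absolutely_integrable:
  fixes \<alpha> :: real
  assumes "\<alpha> > 0"
  shows "(\<lambda>t. (exp (-t) - exp (-\<alpha>*t)) / t) absolutely_integrable_on {0<..}"
proof (rule absolutely_integrable_on_bounded_exp_decay[where m="min 1 \<alpha>" and K=2])
  show "continuous_on {0<..} (\<lambda>t. (exp (-t) - exp (-\<alpha>*t)) / t)"
    by (intro continuous_intros) auto
  show "\<bar>(exp (-t) - exp (-\<alpha>*t)) / t\<bar> \<le> \<bar>\<alpha> - 1\<bar>" if "0 < t" for t
    using frullani_kernel_bound[OF assms that] .
  fix t :: real
  assume "1 \<le> t"
  have "\<bar>(exp (-t) - exp (-\<alpha>*t)) / t\<bar> = \<bar>exp (-t) - exp (-\<alpha>*t)\<bar> / t"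
    using \<open>1 \<le> t\<close> by simp
  also have "\<dots> \<le> \<bar>exp (-t) - exp (-\<alpha>*t)\<bar> / 1"
    using \<open>1 \<le> t\<close> by (intro divide_left_mono) auto
  also have "\<dots> \<le> exp (-t) + exp (-\<alpha>*t)"
    using abs_triangle_ineq4[of "exp (-t)" "exp (-\<alpha>*t)"] by simp
  also have "\<dots> \<le> exp (- min 1 \<alpha> * t) + exp (- min 1 \<alpha> * t)"
    using \<open>1 \<le> t\<close> min.cobounded1[of 1 \<alpha>] min.cobounded2[of 1 \<alpha>]
    by (intro add_mono) (simp_all add: mult_right_mono)
  finally show "\<bar>(exp (-t) - exp (-\<alpha>*t)) / t\<bar> \<le> 2 * exp (- min 1 \<alpha> * t)"
    by simp
qed (use assms in auto)

lemma exp_div_absolutely_integrable_atLeast: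
  fixes p :: real
  assumes "p > 0"
  shows "(\<lambda>t. exp (-t) / t) absolutely_integrable_on {p..}"
proof (rule absolutely_integrable_on_exp_decay[where c=p and m=1 and K="1/p"])
  show "continuous_on {p..} (\<lambda>t. exp (-t) / t)"
    using assms by (intro continuous_intros) auto
  show "\<bar>exp (-t) / t\<bar> \<le> 1/p * exp (-1*t)" if "t \<in> {p..}" for t
    using that assms by (simp add: divide_left_mono)
qed auto

lemma has_integral_inverse_real:
  fixes p q :: real
  assumes "0 < p" "p \<le> q"
  shows "((\<lambda>t. 1/t) has_integral (ln q - ln p)) {p..q}"
proof (rule fundamental_theorem_of_calculus[OF assms(2)])
  show "(ln has_vector_derivative 1/t) (at t within {p..q})" if "t \<in> {p..q}" for t
    using that assms
    by (auto intro!: has_field_derivative_at_within DERIV_ln_divide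
        simp flip: has_real_derivative_iff_has_vector_derivative)
qed

lemma integral_exp_div_bounds:
  fixes p q :: real
  assumes "0 < p" "p \<le> q"
  shows "exp (-q) * (ln q - ln p) \<le> integral {p..q} (\<lambda>t. exp (-t) / t)"
    and "integral {p..q} (\<lambda>t. exp (-t) / t) \<le> ln q - ln p"
proof -
  have int: "((\<lambda>t. exp (-t) / t) has_integral integral {p..q} (\<lambda>t. exp (-t) / t)) {p..q}"
    using assms by (intro integrable_integral integrable_continuous_interval continuous_intros) auto
  show "exp (-q) * (ln q - ln p) \<le> integral {p..q} (\<lambda>t. exp (-t) / t)"
    by (rule has_integral_le[OF has_integral_mult_right[OF has_integral_inverse_real[OF assms]] int])
       (use assms in \<open>auto simp: divide_right_mono\<close>)
  show "integral {p..q} (\<lambda>t. exp (-t) / t) \<le> ln q - ln p"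
    by (rule has_integral_le[OF int has_integral_inverse_real[OF assms]])
       (use assms in \<open>auto simp: divide_right_mono\<close>)
qed

lemma integral_exp_div_tails_diff:
  fixes p q :: real
  assumes "0 < p" "0 < q"
  shows "\<bar>integral {p..} (\<lambda>t. exp (-t) / t) - integral {q..} (\<lambda>t. exp (-t) / t) - (ln q - ln p)\<bar>
    \<le> \<bar>ln q - ln p\<bar> * (1 - exp (- max p q))"
proof -
  have *: "\<bar>integral {p..} (\<lambda>t. exp (-t) / t) - integral {q..} (\<lambda>t. exp (-t) / t) - (ln q - ln p)\<bar>
    \<le> \<bar>ln q - ln p\<bar> * (1 - exp (- max p q))" if "0 < p" "p \<le> q" for p q :: real
  proof -
    have "integral {p..} (\<lambda>t. exp (-t) / t)
        = integral {p..q} (\<lambda>t. exp (-t) / t) + integral {q..} (\<lambda>t. exp (-t) / t)"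
    proof -
      have "{p..} = {p..q} \<union> {q..}"
        using that by auto
      moreover have "(\<lambda>t. exp (-t) / t) integrable_on {p..q}"
        using that by (intro integrable_continuous_interval continuous_intros) auto
      moreover have "(\<lambda>t. exp (-t) / t) integrable_on {q..}"
        using exp_div_absolutely_integrable_atLeast[of q] that set_lebesgue_integral_eq_integral(1) by auto
      moreover have "negligible ({p..q} \<inter> {q..})"
        by (rule negligible_subset[of "{q}"]) auto
      ultimately show ?thesis
        by (simp add: integral_Un)
    qed
    moreover have "0 \<le> ln q - ln p" "exp (-q) \<le> 1"
      using that by auto
    ultimately show ?thesis
      using integral_exp_div_bounds[OF that] that by (simp add: max_def algebra_simps abs_if)
  qed
  show ?thesis
  proof (cases "p \<le> q")
    case True
    then show ?thesis using *[OF assms(1)] by blast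
  next
    case False
    then show ?thesis
      using *[OF assms(2), of p] by (simp add: abs_minus_commute max.commute)
  qed
qed

lemma frullani_kernel_tail:
  fixes \<alpha> \<epsilon> :: real
  assumes "\<alpha> > 0" "\<epsilon> > 0"
  shows "\<bar>integral {\<epsilon>..} (\<lambda>t. (exp (-t) - exp (-\<alpha>*t)) / t) - ln \<alpha>\<bar> \<le> \<bar>ln \<alpha>\<bar> * (1 + \<alpha>) * \<epsilon>"
proof -
  define E where "E t = exp (-t) / t" for t :: real
  have E_int: "E absolutely_integrable_on (*) \<alpha> ` {\<epsilon>..}"
    unfolding E_def image_mult_atLeast[OF assms(1)]
    using exp_div_absolutely_integrable_atLeast assms by simp
  have "integral {\<epsilon>..} (\<lambda>t. (exp (-t) - exp (-\<alpha>*t)) / t) = integral {\<epsilon>..} (\<lambda>t. E t - \<alpha> * E (\<alpha>*t))"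
    using assms by (intro integral_cong) (auto simp: E_def diff_divide_distrib)
  also have "\<dots> = integral {\<epsilon>..} E - integral {\<epsilon>..} (\<lambda>t. \<alpha> * E (\<alpha>*t))"
    using exp_div_absolutely_integrable_atLeast[OF assms(2)] absolutely_integrable_scaled(1)[OF assms(1) _ E_int]
      set_lebesgue_integral_eq_integral(1) unfolding E_def by (intro integral_diff) auto
  also have "\<dots> = integral {\<epsilon>..} E - integral {\<alpha>*\<epsilon>..} E"
    using absolutely_integrable_scaled(2)[OF assms(1) _ E_int] image_mult_atLeast[OF assms(1)] by simp
  finally have "\<bar>integral {\<epsilon>..} (\<lambda>t. (exp (-t) - exp (-\<alpha>*t)) / t) - ln \<alpha>\<bar>
      \<le> \<bar>ln \<alpha>\<bar> * (1 - exp (- max \<epsilon> (\<alpha>*\<epsilon>)))"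
    using integral_exp_div_tails_diff[of \<epsilon> "\<alpha>*\<epsilon>"] assms unfolding E_def by (simp add: ln_mult)
  also have "\<dots> \<le> \<bar>ln \<alpha>\<bar> * ((1 + \<alpha>) * \<epsilon>)"
  proof (rule mult_left_mono)
    have "max \<epsilon> (\<alpha>*\<epsilon>) \<le> (1 + \<alpha>) * \<epsilon>"
      unfolding distrib_right using mult_pos_pos[OF assms] assms by (intro max.boundedI) simp_all
    then show "1 - exp (- max \<epsilon> (\<alpha>*\<epsilon>)) \<le> (1 + \<alpha>) * \<epsilon>"
      using exp_ge_add_one_self[of "- max \<epsilon> (\<alpha>*\<epsilon>)"] by linarith
  qed simp
  finally show ?thesis
    by (simp add: mult.assoc)
qed

lemma eq_if_abs_diff_le_epsilon:
  fixes x y C :: real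
  assumes "\<And>\<epsilon>. \<epsilon> > 0 \<Longrightarrow> \<bar>x - y\<bar> \<le> C * \<epsilon>"
  shows "x = y"
proof -
  have "\<bar>x - y\<bar> \<le> e" if "e > 0" for e
  proof -
    have "C \<ge> 0"
      using assms[of 1] by simp
    then have "\<bar>x - y\<bar> \<le> C * (e / (\<bar>C\<bar> + 1))"
      using assms[of "e / (\<bar>C\<bar> + 1)"] that by simp
    also have "\<dots> \<le> e"
      using \<open>C \<ge> 0\<close> that by (simp add: field_simps)
    finally show ?thesis .
  qed
  then show ?thesis
    using dense_eq0_I[of "x - y"] by simp
qed

theorem frullani_exp:
  fixes \<alpha> :: real
  assumes "\<alpha> > 0"
  shows "((\<lambda>t. (exp (-t) - exp (-\<alpha>*t)) / t) has_integral ln \<alpha>) {0<..}"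
proof -
  define h where "h t = (exp (-t) - exp (-\<alpha>*t)) / t" for t :: real
  have h_int: "h absolutely_integrable_on {0<..}"
    unfolding h_def by (rule frullani_kernel_absolutely_integrable[OF assms])
  then have "h integrable_on {0<..}"
    using set_lebesgue_integral_eq_integral(1) by blast
  moreover have neg: "negligible {t \<in> {0<..} - {0..}. h t \<noteq> 0}" "negligible {t \<in> {0..} - {0<..}. h t \<noteq> 0}"
    by (auto intro: negligible_subset[of "{0}"])
  ultimately have "h integrable_on {0..}"
    by (rule integrable_spike_set)
  have "integral {0<..} h = ln \<alpha>"
  proof (rule eq_if_abs_diff_le_epsilon)
    fix \<epsilon> :: real
    assume "\<epsilon> > 0"
    have "h integrable_on {0..\<epsilon>}"
      using \<open>h integrable_on {0..}\<close> by (rule integrable_on_subinterval) auto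
    moreover have "h absolutely_integrable_on {\<epsilon>..}"
      by (rule set_integrable_subset[OF h_int]) (use \<open>\<epsilon> > 0\<close> in auto)
    then have "h integrable_on {\<epsilon>..}"
      using set_lebesgue_integral_eq_integral(1) by blast
    moreover have "negligible ({0..\<epsilon>} \<inter> {\<epsilon>..})"
      by (rule negligible_subset[of "{\<epsilon>}"]) auto
    moreover have "{0..} = {0..\<epsilon>} \<union> {\<epsilon>..}"
      using \<open>\<epsilon> > 0\<close> by auto
    ultimately have split: "integral {0<..} h = integral {0..\<epsilon>} h + integral {\<epsilon>..} h"
      using integral_spike_set[OF neg] by simp
    have "\<bar>integral {0..\<epsilon>} h\<bar> \<le> \<bar>\<alpha> - 1\<bar> * \<epsilon>"
      using has_integral_bound_real[of "\<bar>\<alpha> - 1\<bar>" "{0}" h _ 0 \<epsilon>] \<open>h integrable_on {0..\<epsilon>}\<close> \<open>\<epsilon> > 0\<close>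
        frullani_kernel_bound[OF assms] unfolding h_def by force
    moreover have "\<bar>integral {\<epsilon>..} h - ln \<alpha>\<bar> \<le> \<bar>ln \<alpha>\<bar> * (1 + \<alpha>) * \<epsilon>"
      unfolding h_def by (rule frullani_kernel_tail[OF assms \<open>\<epsilon> > 0\<close>])
    ultimately show "\<bar>integral {0<..} h - ln \<alpha>\<bar> \<le> (\<bar>\<alpha> - 1\<bar> + \<bar>ln \<alpha>\<bar> * (1 + \<alpha>)) * \<epsilon>"
      unfolding split distrib_right by linarith
  qed
  then show ?thesis
    using integrable_integral[OF \<open>h integrable_on {0<..}\<close>] unfolding h_def by simp
qed

section \<open>The integrand of \<open>ln G\<close>\<close>

definition lnG_integrand :: "real \<Rightarrow> real \<Rightarrow> real \<Rightarrow> real" where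
  "lnG_integrand x \<alpha> u = exp (-\<alpha>*u) / u *
      ((x - 1) * (x - 2*\<alpha>) / (2*\<alpha>) - (x - 1) / (1 - exp (-\<alpha>*u))
       + (exp (-(1-\<alpha>)*u) - exp (-(x-\<alpha>)*u)) / ((1 - exp (-u)) * (1 - exp (-\<alpha>*u))))"

lemma lnG_eq_integral: "lnG x \<alpha> = integral {0<..} (lnG_integrand x \<alpha>)"
  unfolding lnG_def lnG_integrand_def by simp

text \<open>The pairs \<open>(c, l)\<close> of the numerator \<open>\<Sum> c exp(-l u)\<close> left after multiplying the integrand
  by \<open>u (1 - exp(-\<alpha> u)) (1 - exp(-u))\<close>; \<open>P\<close> is the constant term of the integrand.\<close>
definition lnG_numerator_terms :: "real \<Rightarrow> real \<Rightarrow> (real \<times> real) list" where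
  "lnG_numerator_terms x \<alpha> = (let P = (x - 1) * (x - 2*\<alpha>) / (2*\<alpha>) in
     [(P - (x - 1), \<alpha>), (- P, 2*\<alpha>), (x - 1 - P, \<alpha> + 1), (P, 2*\<alpha> + 1), (1, 1), (-1, x)])"

lemma lnG_integrand_eq_quotient:
  assumes "\<alpha> > 0" "u > 0"
  shows "lnG_integrand x \<alpha> u
    = exp_sum (lnG_numerator_terms x \<alpha>) u / (u * (1 - exp (-\<alpha>*u)) * (1 - exp (-u)))"
proof -
  define A B X where "A = exp (-\<alpha>*u)" and "B = exp (-u)" and "X = exp (-x*u)"
  define P where "P = (x - 1) * (x - 2*\<alpha>) / (2*\<alpha>)"
  have "1 - A \<noteq> 0" "1 - B \<noteq> 0" "A \<noteq> 0"
    using assms unfolding A_def B_def by auto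
  have "lnG_integrand x \<alpha> u = A / u * (P - (x - 1) / (1 - A) + (B / A - X / A) / ((1 - B) * (1 - A)))"
    unfolding lnG_integrand_def A_def B_def X_def P_def
    by (simp flip: exp_diff add: algebra_simps)
  also have "\<dots> = (A * P * (1 - A) * (1 - B) - A * (x - 1) * (1 - B) + (B - X)) / (u * (1 - A) * (1 - B))"
    using \<open>1 - A \<noteq> 0\<close> \<open>1 - B \<noteq> 0\<close> \<open>A \<noteq> 0\<close> \<open>u > 0\<close>
    by (simp add: divide_simps) (simp add: algebra_simps)
  also have "\<dots> = ((P - (x - 1)) * A - P * (A * A) + (x - 1 - P) * (A * B) + P * (A * A * B) + B - X)
      / (u * (1 - A) * (1 - B))"
    by (simp add: algebra_simps)
  also have "\<dots> = exp_sum (lnG_numerator_terms x \<alpha>) u / (u * (1 - exp (-\<alpha>*u)) * (1 - exp (-u)))"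
    unfolding exp_sum_def lnG_numerator_terms_def P_def[symmetric] A_def B_def X_def
    by (simp flip: exp_add add: algebra_simps)
  finally show ?thesis .
qed

lemma lnG_numerator_terms_moments:
  assumes "\<alpha> > 0"
  shows "(\<Sum>(c, l)\<leftarrow>lnG_numerator_terms x \<alpha>. c) = 0"
    "(\<Sum>(c, l)\<leftarrow>lnG_numerator_terms x \<alpha>. c * l) = 0"
    "(\<Sum>(c, l)\<leftarrow>lnG_numerator_terms x \<alpha>. c * l^2) = 0"
  using assms unfolding lnG_numerator_terms_def Let_def
  by (simp_all add: field_simps power2_eq_square)

lemma lnG_numerator_scaled:
  assumes "\<alpha> > 0"
  shows "exp_sum (lnG_numerator_terms x (1/\<alpha>)) (\<alpha>*t)
    = exp_sum (lnG_numerator_terms (\<alpha>*x) \<alpha>) t - x * exp_sum (lnG_numerator_terms \<alpha> \<alpha>) t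
      + (x - 1) * (\<alpha>*x - 2) / 2 * (exp (-t) - exp (-\<alpha>*t)) * (1 - exp (-\<alpha>*t)) * (1 - exp (-t))"
proof -
  define A B C where "A = exp (-\<alpha>*t)" and "B = exp (-t)" and "C = exp (-\<alpha>*x*t)"
  have "exp (- (1/\<alpha>) * (\<alpha>*t)) = B" "exp (- (2 * (1/\<alpha>)) * (\<alpha>*t)) = B * B"
    "exp (- (1/\<alpha> + 1) * (\<alpha>*t)) = B * A" "exp (- (2 * (1/\<alpha>) + 1) * (\<alpha>*t)) = B * B * A"
    "exp (- 1 * (\<alpha>*t)) = A" "exp (- x * (\<alpha>*t)) = C"
    "exp (- \<alpha> * t) = A" "exp (- (2*\<alpha>) * t) = A * A" "exp (- (\<alpha> + 1) * t) = A * B"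
    "exp (- (2*\<alpha> + 1) * t) = A * A * B" "exp (- 1 * t) = B" "exp (- (\<alpha>*x) * t) = C"
    unfolding A_def B_def C_def using assms by (simp_all flip: exp_add add: algebra_simps)
  note exps = this
  show ?thesis
    unfolding exp_sum_def lnG_numerator_terms_def Let_def
    by (simp only: list.map sum_list.Cons sum_list.Nil prod.case exps A_def[symmetric] B_def[symmetric])
       (use assms in \<open>simp add: field_simps\<close>)
qed

lemma lnG_integrand_scaled:
  assumes "\<alpha> > 0" "t > 0"
  shows "\<alpha> * lnG_integrand x (1/\<alpha>) (\<alpha>*t)
    = lnG_integrand (\<alpha>*x) \<alpha> t - x * lnG_integrand \<alpha> \<alpha> t
      + (x - 1) * (\<alpha>*x - 2) / 2 * ((exp (-t) - exp (-\<alpha>*t)) / t)"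
proof -
  define D where "D = t * (1 - exp (-\<alpha>*t)) * (1 - exp (-t))"
  have "D \<noteq> 0"
    using assms unfolding D_def by auto
  have "\<alpha> * lnG_integrand x (1/\<alpha>) (\<alpha>*t) = exp_sum (lnG_numerator_terms x (1/\<alpha>)) (\<alpha>*t) / D"
    using assms lnG_integrand_eq_quotient[of "1/\<alpha>" "\<alpha>*t" x] unfolding D_def by (simp add: mult_ac)
  also have "\<dots> = lnG_integrand (\<alpha>*x) \<alpha> t - x * lnG_integrand \<alpha> \<alpha> t
      + (x - 1) * (\<alpha>*x - 2) / 2 * ((exp (-t) - exp (-\<alpha>*t)) / t)"
    using assms \<open>D \<noteq> 0\<close> unfolding lnG_numerator_scaled[OF assms(1)]
    by (simp add: lnG_integrand_eq_quotient D_def[symmetric] diff_divide_distrib add_divide_distrib)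
      (simp add: D_def field_simps)
  finally show ?thesis .
qed

lemma lnG_integrand_absolutely_integrable:
  assumes "\<alpha> > 0" "x > 0"
  shows "lnG_integrand x \<alpha> absolutely_integrable_on {0<..}"
proof -
  have "(\<lambda>u. exp_sum (lnG_numerator_terms x \<alpha>) u / (u * (1 - exp (-\<alpha>*u)) * (1 - exp (-u))))
      absolutely_integrable_on {0<..}"
    using assms lnG_numerator_terms_moments[OF assms(1)]
    by (intro exp_sum_quotient_absolutely_integrable[where m="min \<alpha> (min 1 x)"])
       (auto simp: lnG_numerator_terms_def Let_def)
  then show ?thesis
    by (rule set_integrable_cong[THEN iffD1, rotated -1]) (auto simp: lnG_integrand_eq_quotient assms)
qed

lemma has_integral_lnG_integrand:
  assumes "\<alpha> > 0" "x > 0"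
  shows "(lnG_integrand x \<alpha> has_integral lnG x \<alpha>) {0<..}"
  using lnG_integrand_absolutely_integrable[OF assms] set_lebesgue_integral_eq_integral(1)
  unfolding lnG_eq_integral by blast

lemma lnG_reciprocal_parameter:
  assumes "\<alpha> > 0" "x > 0"
  shows "lnG x (1/\<alpha>) = lnG (\<alpha>*x) \<alpha> - x * lnG \<alpha> \<alpha> + (x - 1) * (\<alpha>*x - 2) / 2 * ln \<alpha>"
proof -
  have int: "lnG_integrand x (1/\<alpha>) absolutely_integrable_on (*) \<alpha> ` {0<..}"
    using lnG_integrand_absolutely_integrable[of "1/\<alpha>" x] assms by (simp add: image_mult_greaterThan)
  have "lnG x (1/\<alpha>) = integral {0<..} (\<lambda>t. \<alpha> * lnG_integrand x (1/\<alpha>) (\<alpha>*t))"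
    using absolutely_integrable_scaled(2)[OF assms(1) _ int] assms
    by (simp add: lnG_eq_integral image_mult_greaterThan)
  also have "\<dots> = integral {0<..} (\<lambda>t. lnG_integrand (\<alpha>*x) \<alpha> t - x * lnG_integrand \<alpha> \<alpha> t
      + (x - 1) * (\<alpha>*x - 2) / 2 * ((exp (-t) - exp (-\<alpha>*t)) / t))"
    using assms by (intro integral_cong) (simp add: lnG_integrand_scaled)
  also have "\<dots> = lnG (\<alpha>*x) \<alpha> - x * lnG \<alpha> \<alpha> + (x - 1) * (\<alpha>*x - 2) / 2 * ln \<alpha>"
    using assms
    by (intro integral_unique has_integral_add has_integral_diff has_integral_mult_right
        has_integral_lnG_integrand frullani_exp) auto
  finally show ?thesis .
qed

theorem mainTheorem13:
  fixes \<alpha> x :: real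
  assumes "\<alpha> > 0" and "x > 0"
  shows "G x (1/\<alpha>) = G (\<alpha>*x) \<alpha> / (G \<alpha> \<alpha>) powr x * \<alpha> powr ((x - 1) * (\<alpha>*x - 2) / 2)"
  using assms
  by (simp add: G_def lnG_reciprocal_parameter powr_def exp_add exp_diff)

end
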